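(* Let $A$ be a commutative ring and let $(x_0,\ldots,x_n)$ be a path in $Y(A)$. Let $X\in\mathrm{SL}_2(A)$ with $\infty\cdot X=x_0$ and let $Y\in\mathrm{SL}_2(A)$ be such that $Z:=XY^{-1}\in B$, say $Z=\begin{pmatrix}u&0\\c&u^{-1}\end{pmatrix}$. Let $a_1,\ldots,a_n\in A$ be the elements with $x_i=\infty\cdot E(a_i)\cdots E(a_1)X$ for $1\le i\le n$, and let $b_1,\ldots,b_n\in A$ be the elements with $x_i=\infty\cdot E(b_i)\cdots E(b_1)Y$ for $1\le i\le n$. Then $b_1=u^2a_1+cu$ and $b_i=u^{2(-1)^{i-1}}a_i$ for all $i\ge2$.
   Context: A unimodular row over $A$ is $(a,b)\in A^2$ with $aA+bA=A$. $\Gamma(A)$ is the graph whose vertices are classes of unimodular rows modulo multiplication by units, with $\{[u],[v]\}$ an edge iff the matrix with rows $u,v$ lies in $\mathrm{GL}_2(A)$; $Y(A)$ is its clique complex, and a path is a sequence of vertices with consecutive ones adjacent. $\mathrm{SL}_2(A)$ acts on vertices on the right by $[u]\cdot M=[uM]$; $\infty=[(1,0)]$. $E(a)=\begin{pmatrix}a&1\\-1&0\end{pmatrix}$. $B$ is the group of lower triangular matrices in $\mathrm{SL}_2(A)$. (For a path and a matrix $X$ with $\infty\cdot X=x_0$, the elements $a_i$ with $x_i=\infty\cdot E(a_i)\cdots E(a_1)X$ exist and are unique.) *)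

theory Defs
  imports "HOL-Analysis.Analysis"
begin

text \<open>Rows are elements of A^2, 2x2 matrices are elements of A^2^2 (rows indexed first);
  the right action of a matrix on a row is the library's vector-matrix product.\<close>

definition unimodular :: "'a::comm_ring_1 ^ 2 \<Rightarrow> bool" where
  "unimodular v \<longleftrightarrow> (\<exists>s t. v$1 * s + v$2 * t = 1)"

definition row_class :: "'a::comm_ring_1 ^ 2 \<Rightarrow> ('a ^ 2) set" where
  "row_class v = {w. \<exists>u. u dvd 1 \<and> w = u *s v}"

definition vertices :: "('a::comm_ring_1 ^ 2) set set" where
  "vertices = {row_class v | v. unimodular v}"

definition rows2 :: "'a::comm_ring_1 ^ 2 \<Rightarrow> 'a ^ 2 \<Rightarrow> 'a ^ 2 ^ 2" where
  "rows2 u v = (\<chi> i. if i = 1 then u else v)"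

definition in_GL2 :: "'a::comm_ring_1 ^ 2 ^ 2 \<Rightarrow> bool" where
  "in_GL2 M \<longleftrightarrow> det M dvd 1"

definition in_SL2 :: "'a::comm_ring_1 ^ 2 ^ 2 \<Rightarrow> bool" where
  "in_SL2 M \<longleftrightarrow> det M = 1"

text \<open>Adjacency in Gamma(A) (equivalently the 1-skeleton of Y(A)).\<close>
definition adjacent :: "('a::comm_ring_1 ^ 2) set \<Rightarrow> ('a ^ 2) set \<Rightarrow> bool" where
  "adjacent x y \<longleftrightarrow> x \<in> vertices \<and> y \<in> vertices \<and>
     (\<exists>u v. x = row_class u \<and> y = row_class v \<and> in_GL2 (rows2 u v))"

definition is_path :: "(nat \<Rightarrow> ('a::comm_ring_1 ^ 2) set) \<Rightarrow> nat \<Rightarrow> bool" where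
  "is_path x n \<longleftrightarrow> (\<forall>i\<le>n. x i \<in> vertices) \<and> (\<forall>i<n. adjacent (x i) (x (Suc i)))"

definition act :: "('a::comm_ring_1 ^ 2) set \<Rightarrow> 'a ^ 2 ^ 2 \<Rightarrow> ('a ^ 2) set" where
  "act x M = (\<Union>v\<in>x. row_class (v v* M))"

definition infty :: "('a::comm_ring_1 ^ 2) set" where
  "infty = row_class (vector [1, 0])"

definition Emat :: "'a::comm_ring_1 \<Rightarrow> 'a ^ 2 ^ 2" where
  "Emat a = vector [vector [a, 1], vector [-1, 0]]"

fun Eprod :: "(nat \<Rightarrow> 'a::comm_ring_1) \<Rightarrow> nat \<Rightarrow> 'a ^ 2 ^ 2" where
  "Eprod a 0 = mat 1"
| "Eprod a (Suc i) = Emat (a (Suc i)) ** Eprod a i"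

definition in_B :: "'a::comm_ring_1 ^ 2 ^ 2 \<Rightarrow> bool" where
  "in_B M \<longleftrightarrow> in_SL2 M \<and> M$1$2 = 0"

end

theory Submission
  imports Defs
begin

text \<open>Write \<open>L = Z\<inverse>\<close>, so that \<open>Y = L X\<close> with \<open>L \<in> B\<close>. By induction on \<open>i\<close>,
  \<open>E(b\<^sub>i)\<cdots>E(b\<^sub>1) L X = D\<^sub>i E(a\<^sub>i)\<cdots>E(a\<^sub>1) X\<close> for a matrix \<open>D\<^sub>i \<in> B\<close>: since both sides
  send \<open>\<infinity>\<close> to \<open>x\<^sub>i\<close>, their first rows are proportional, and the rows of an
  \<open>SL\<^sub>2\<close> matrix being linearly independent this forces \<open>E(b) D = D' E(a)\<close> with
  \<open>D'\<close> the diagonal matrix with the diagonal entries of \<open>D\<close> swapped, and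
  \<open>b = d\<^sub>2\<^sub>2 (d\<^sub>2\<^sub>2 a - d\<^sub>2\<^sub>1)\<close>. So \<open>D\<^sub>0 = L\<close> and \<open>D\<^sub>i\<close> for \<open>i \<ge> 1\<close> alternates between
  \<open>diag(u, u\<inverse>)\<close> and \<open>diag(u\<inverse>, u)\<close>.\<close>

lemma vector_10_vector_matrix_mult: "(vector [1, 0] :: 'a::comm_ring_1^2) v* M = M$1"
  by (simp add: vec_eq_iff vector_matrix_mult_def sum_2)

lemma scalar_vector_matrix_mult:
  "((k::'a::comm_ring_1) *s v) v* M = k *s (v v* M)"
  by (simp add: vec_eq_iff vector_matrix_mult_def sum_distrib_left algebra_simps)

lemma act_infty_eq_imp_first_rows_proportional:
  fixes M N :: "'a::comm_ring_1^2^2"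
  assumes "act infty M = act infty N"
  shows "\<exists>s. N$1 = s *s M$1"
proof -
  have "vector [1, 0] \<in> (infty :: ('a^2) set)"
    unfolding infty_def row_class_def by (auto intro!: exI[of _ 1])
  moreover have "N$1 \<in> row_class (vector [1, 0] v* N)"
    unfolding vector_10_vector_matrix_mult row_class_def by (auto intro!: exI[of _ 1])
  ultimately have "N$1 \<in> act infty M"
    using assms unfolding act_def by blast
  then obtain v k where v: "v \<in> infty" and k: "N$1 = k *s (v v* M)"
    unfolding act_def row_class_def by blast
  from v obtain t where "v = t *s vector [1, 0]"
    unfolding infty_def row_class_def by blast
  with k have "N$1 = (k * t) *s M$1"
    by (simp add: scalar_vector_matrix_mult vector_10_vector_matrix_mult)
  then show ?thesis by blast
qed

lemma det_eq_1_rows_independent: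
  fixes M :: "'a::comm_ring_1^2^2"
  assumes "det M = 1" and "\<alpha> *s M$1 + \<beta> *s M$2 = 0"
  shows "\<alpha> = 0" and "\<beta> = 0"
proof -
  have det: "M$1$1 * M$2$2 - M$1$2 * M$2$1 = 1"
    using assms(1) by (simp add: det_2)
  have e1: "\<alpha> * M$1$1 + \<beta> * M$2$1 = 0" and e2: "\<alpha> * M$1$2 + \<beta> * M$2$2 = 0"
    using assms(2) by (auto simp: vec_eq_iff forall_2)
  have "\<alpha> = \<alpha> * (M$1$1 * M$2$2 - M$1$2 * M$2$1)"
    using det by simp
  also have "\<dots> = M$2$2 * (\<alpha> * M$1$1 + \<beta> * M$2$1) - M$2$1 * (\<alpha> * M$1$2 + \<beta> * M$2$2)"
    by (simp add: algebra_simps)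
  finally show "\<alpha> = 0"
    using e1 e2 by simp
  have "\<beta> = \<beta> * (M$1$1 * M$2$2 - M$1$2 * M$2$1)"
    using det by simp
  also have "\<dots> = M$1$1 * (\<alpha> * M$1$2 + \<beta> * M$2$2) - M$1$2 * (\<alpha> * M$1$1 + \<beta> * M$2$1)"
    by (simp add: algebra_simps)
  finally show "\<beta> = 0"
    using e1 e2 by simp
qed

lemma det_Emat: "det (Emat a) = 1"
  by (simp add: det_2 Emat_def)

lemma det_Eprod: "det (Eprod a i) = 1"
  by (induction i) (auto simp: det_mul det_Emat)

definition diag2 :: "'a::comm_ring_1 \<Rightarrow> 'a \<Rightarrow> 'a^2^2" where
  "diag2 p q = vector [vector [p, 0], vector [0, q]]"

lemma diag2_entries [simp]:
  "diag2 p q $1$1 = p" "diag2 p q $1$2 = 0" "diag2 p q $2$1 = 0" "diag2 p q $2$2 = q"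
  by (simp_all add: diag2_def)

definition diag_swap :: "'a::comm_ring_1^2^2 \<Rightarrow> 'a^2^2" where
  "diag_swap L = diag2 (L$2$2) (L$1$1)"

lemma in_B_iff: "in_B L \<longleftrightarrow> L$1$2 = 0 \<and> L$1$1 * L$2$2 = 1"
  by (auto simp: in_B_def in_SL2_def det_2)

lemma in_B_diag_swap: "in_B L \<Longrightarrow> in_B (diag_swap L)"
  by (simp add: in_B_iff diag_swap_def mult.commute)

lemma funpow_Suc_diag_swap:
  "(diag_swap ^^ Suc i) L = (if even i then diag_swap L else diag2 (L$1$1) (L$2$2))"
  by (induction i) (simp_all add: diag_swap_def)

lemma Emat_mult_B:
  fixes M L :: "'a::comm_ring_1^2^2"
  assumes M: "det M = 1" and L: "in_B L"
    and act: "act infty (Emat a ** M) = act infty (Emat b ** L ** M)"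
  shows "Emat b ** L = diag_swap L ** Emat a"
    and "b = L$2$2 * (L$2$2 * a - L$2$1)"
proof -
  have L12: "L$1$2 = 0" and L1122: "L$1$1 * L$2$2 = 1"
    using L by (simp_all add: in_B_iff)
  obtain s where "(Emat b ** L ** M)$1 = s *s (Emat a ** M)$1"
    using act_infty_eq_imp_first_rows_proportional[OF act] by blast
  then have "(b * L$1$1 + L$2$1 - s * a) *s M$1 + (L$2$2 - s) *s M$2 = 0"
    using L12 by (simp add: vec_eq_iff forall_2 matrix_matrix_mult_def sum_2 Emat_def algebra_simps)
  from det_eq_1_rows_independent[OF M this]
  have rel: "b * L$1$1 + L$2$1 = L$2$2 * a"
    by (simp add: algebra_simps)
  show "Emat b ** L = diag_swap L ** Emat a"
    using rel L12
    by (simp add: vec_eq_iff forall_2 matrix_matrix_mult_def sum_2 Emat_def diag_swap_def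
        algebra_simps)
  have "b = L$2$2 * (b * L$1$1)"
    using L1122 by (simp add: algebra_simps)
  also have "b * L$1$1 = L$2$2 * a - L$2$1"
    using rel by (simp add: algebra_simps)
  finally show "b = L$2$2 * (L$2$2 * a - L$2$1)" .
qed

lemma in_B_funpow_diag_swap: "in_B L \<Longrightarrow> in_B ((diag_swap ^^ j) L)"
  by (induction j) (simp_all add: in_B_diag_swap)

context
  fixes M L :: "'a::comm_ring_1^2^2" and a b :: "nat \<Rightarrow> 'a" and n :: nat
  assumes M: "det M = 1" and L: "in_B L"
    and act: "\<And>i. 1 \<le> i \<Longrightarrow> i \<le> n \<Longrightarrow>
      act infty (Eprod a i ** M) = act infty (Eprod b i ** (L ** M))"
begin

lemma act_infty_Emat_step:
  assumes "Suc j \<le> n" and "Eprod b j ** (L ** M) = (diag_swap ^^ j) L ** (Eprod a j ** M)"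
  shows "act infty (Emat (a (Suc j)) ** (Eprod a j ** M)) =
    act infty (Emat (b (Suc j)) ** (diag_swap ^^ j) L ** (Eprod a j ** M))"
proof -
  have "Eprod b (Suc j) ** (L ** M) = Emat (b (Suc j)) ** (Eprod b j ** (L ** M))"
    by (simp add: matrix_mul_assoc)
  also have "\<dots> = Emat (b (Suc j)) ** (diag_swap ^^ j) L ** (Eprod a j ** M)"
    using assms(2) by (simp add: matrix_mul_assoc[symmetric])
  finally show ?thesis
    using act[of "Suc j"] assms(1) by (simp add: matrix_mul_assoc)
qed

lemma Eprod_B_transport:
  "i \<le> n \<Longrightarrow> Eprod b i ** (L ** M) = (diag_swap ^^ i) L ** (Eprod a i ** M)"
proof (induction i)
  case 0
  then show ?case by simp
next
  case (Suc i)
  let ?D = "(diag_swap ^^ i) L" and ?N = "Eprod a i ** M"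
  have IH: "Eprod b i ** (L ** M) = ?D ** ?N"
    using Suc by simp
  have "Eprod b (Suc i) ** (L ** M) = Emat (b (Suc i)) ** ?D ** ?N"
    using IH by (simp add: matrix_mul_assoc[symmetric])
  also have "\<dots> = diag_swap ?D ** Emat (a (Suc i)) ** ?N"
    using Emat_mult_B(1)[OF _ in_B_funpow_diag_swap[OF L] act_infty_Emat_step[OF Suc.prems IH]]
    by (simp add: det_mul det_Eprod M)
  finally show ?case
    by (simp add: matrix_mul_assoc)
qed

lemma Eprod_B_coefficient:
  assumes "Suc j \<le> n"
  shows "b (Suc j) = (let D = (diag_swap ^^ j) L in D$2$2 * (D$2$2 * a (Suc j) - D$2$1))"
  using Emat_mult_B(2)[OF _ in_B_funpow_diag_swap[OF L]
      act_infty_Emat_step[OF assms Eprod_B_transport]] assms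
  by (simp add: det_mul det_Eprod M Let_def)

lemma Eprod_B_first_coefficient:
  "1 \<le> n \<Longrightarrow> b 1 = L$2$2 * (L$2$2 * a 1 - L$2$1)"
  using Eprod_B_coefficient[of 0] by simp

lemma Eprod_B_later_coefficient:
  assumes "2 \<le> i" and "i \<le> n"
  shows "b i = (if even i then L$1$1^2 else L$2$2^2) * a i"
proof -
  obtain j where i: "i = Suc (Suc j)"
    using assms(1) by (metis add_2_eq_Suc le_Suc_ex)
  have D: "(diag_swap ^^ Suc j) L = (if even i then diag_swap L else diag2 (L$1$1) (L$2$2))"
    using funpow_Suc_diag_swap[of j L] by (simp add: i)
  show ?thesis
    using Eprod_B_coefficient[of "Suc j"] assms(2) unfolding i D Let_def
    by (cases "even j") (simp_all add: diag_swap_def power2_eq_square algebra_simps)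
qed

end

theorem proposition5p1:
  fixes x :: "nat \<Rightarrow> ('a::comm_ring_1 ^ 2) set" and n :: nat
    and X Y Z :: "'a ^ 2 ^ 2" and u c :: 'a and a b :: "nat \<Rightarrow> 'a"
  assumes path: "is_path x n"
    and X: "in_SL2 X" and X0: "act infty X = x 0"
    and Y: "in_SL2 Y"
    and Z: "X = Z ** Y" and ZB: "in_B Z"
    and Zu: "Z$1$1 = u" and Zc: "Z$2$1 = c" and Zuinv: "Z$2$2 * u = 1"
    and a: "\<And>i. 1 \<le> i \<Longrightarrow> i \<le> n \<Longrightarrow> x i = act infty (Eprod a i ** X)"
    and b: "\<And>i. 1 \<le> i \<Longrightarrow> i \<le> n \<Longrightarrow> x i = act infty (Eprod b i ** Y)"
  shows "(1 \<le> n \<longrightarrow> b 1 = u^2 * a 1 + c * u) \<and>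
         (\<forall>i. 2 \<le> i \<and> i \<le> n \<longrightarrow>
            b i = (if even i then Z$2$2^2 else u^2) * a i)"
proof -
  define L :: "'a^2^2" where "L = vector [vector [Z$2$2, 0], vector [-c, u]]"
  have "L ** Z = mat 1"
    using ZB Zu Zc Zuinv
    by (simp add: in_B_def vec_eq_iff forall_2 matrix_matrix_mult_def sum_2 L_def mat_def
        algebra_simps)
  then have Y_eq: "Y = L ** X"
    by (simp add: Z matrix_mul_assoc)
  have L: "in_B L"
    using Zuinv by (simp add: in_B_iff L_def)
  have detX: "det X = 1"
    using X by (simp add: in_SL2_def)
  have act: "act infty (Eprod a i ** X) = act infty (Eprod b i ** (L ** X))"
    if "1 \<le> i" "i \<le> n" for i
    using a[OF that] b[OF that] Y_eq by simp
  show ?thesis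
    using Eprod_B_first_coefficient[OF detX L act] Eprod_B_later_coefficient[OF detX L act]
    by (simp add: L_def power2_eq_square algebra_simps)
qed

end
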